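(* Let $\mathsf{P}>0$, $A_{\mathsf{u},k}>0$, $\sigma_k^2>0$, $\mathsf{g}_k>0$ for $k\in\{1,2\}$, $k_0,\eta>0$, $\rho\in\mathbb{C}$ with $|\rho|<1$, $\overline{\rho}=1-|\rho|^2$. Let $\widetilde{\gamma}_{\mathsf{dl},k}(x)=\frac{A_{\mathsf{u},k}k_0^2\eta^2}{4\pi\sigma_k^2}x$ and $$\mathsf{C}_{\mathsf{dl}}=\max_{\mathsf{P}_1,\mathsf{P}_2\ge0,\ \mathsf{P}_1+\mathsf{P}_2\le\mathsf{P}}\log_2\big(1+\widetilde{\gamma}_{\mathsf{dl},1}(\mathsf{P}_1)\mathsf{g}_1+\widetilde{\gamma}_{\mathsf{dl},2}(\mathsf{P}_2)\mathsf{g}_2+\widetilde{\gamma}_{\mathsf{dl},1}(\mathsf{P}_1)\widetilde{\gamma}_{\mathsf{dl},2}(\mathsf{P}_2)\mathsf{g}_1\mathsf{g}_2\overline{\rho}\big).$$ Let $\xi=\dfrac{A_{\mathsf{u},1}\mathsf{g}_1/\sigma_1^2-A_{\mathsf{u},2}\mathsf{g}_2/\sigma_2^2}{A_{\mathsf{u},1}A_{\mathsf{u},2}k_0^2\eta^2\mathsf{g}_1\mathsf{g}_2\overline{\rho}/(4\pi\sigma_1^2\sigma_2^2)}$, $\varepsilon_1=\widetilde{\gamma}_{\mathsf{dl},1}\big(\tfrac{\mathsf{P}+\xi}{2}\big)\mathsf{g}_1$ and $\varepsilon_2=\widetilde{\gamma}_{\mathsf{dl},2}\big(\tfrac{\mathsf{P}-\xi}{2}\big)\mathsf{g}_2$.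 Then $$\mathsf{C}_{\mathsf{dl}}=\begin{cases}\log_2(1+\widetilde{\gamma}_{\mathsf{dl},1}(\mathsf{P})\mathsf{g}_1)&\xi\ge\mathsf{P},\\\log_2(1+\widetilde{\gamma}_{\mathsf{dl},2}(\mathsf{P})\mathsf{g}_2)&\xi\le-\mathsf{P},\\\log_2(1+\varepsilon_1+\varepsilon_2+\varepsilon_1\varepsilon_2\overline{\rho})&\text{otherwise}.\end{cases}$$
   Context: In the paper, the maximum defining $\mathsf{C}_{\mathsf{dl}}$ is the sum-rate capacity of the dual uplink channel, which by uplink–downlink duality equals the sum-rate capacity of the two-user downlink channel from a continuous-aperture array $\mathcal{A}$; here $\mathsf{g}_k=\int_{\mathcal{A}}|\mathsf{G}_k|^2$ are the users' channel gains and $\rho=\int_{\mathcal{A}}\mathsf{G}_1^*\mathsf{G}_2/\sqrt{\mathsf{g}_1\mathsf{g}_2}$ their channel correlation factor. *)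

theory Defs
  imports "HOL-Analysis.Analysis"
begin

definition gamma_dl :: "real \<Rightarrow> real \<Rightarrow> real \<Rightarrow> real \<Rightarrow> real \<Rightarrow> real" where
  "gamma_dl Au sigma2 k0 eta x = Au * k0^2 * eta^2 / (4 * pi * sigma2) * x"

text \<open>Downlink sum-rate capacity: maximum over the power splits (the maximum exists
  since the feasible set is compact and the objective continuous; we write it as Sup).\<close>
definition C_dl :: "real \<Rightarrow> real \<Rightarrow> real \<Rightarrow> real \<Rightarrow> real \<Rightarrow> real \<Rightarrow> real \<Rightarrow> real \<Rightarrow> real \<Rightarrow> real \<Rightarrow> real" where
  "C_dl P Au1 Au2 s1 s2 g1 g2 k0 eta rhobar =
     Sup ((\<lambda>(P1, P2). log 2 (1 + gamma_dl Au1 s1 k0 eta P1 * g1 + gamma_dl Au2 s2 k0 eta P2 * g2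
            + gamma_dl Au1 s1 k0 eta P1 * gamma_dl Au2 s2 k0 eta P2 * g1 * g2 * rhobar))
          ` {(P1, P2). P1 \<ge> 0 \<and> P2 \<ge> 0 \<and> P1 + P2 \<le> P})"

end

theory Submission
  imports Defs
begin

text \<open>Writing \<open>a x\<close>, \<open>b y\<close> for the received SNRs of the two users and \<open>r = rhobar\<close>,
  the objective \<open>1 + a x + b y + a b r x y\<close> increases in \<open>y\<close>, so the full power
  \<open>x + y = P\<close> is used. On that edge it equals \<open>1 + b P + a b r \<cdot> x (P + \<xi> - x)\<close> with
  \<open>\<xi> = (a - b) / (a b r)\<close>: a concave parabola in \<open>x\<close> whose vertex \<open>(P + \<xi>) / 2\<close>,
  clamped to \<open>[0, P]\<close>, is the optimal power of user 1. The three cases of the theorem are the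
  three outcomes of the clamping.\<close>

definition sum_rate_gain :: "real \<Rightarrow> real \<Rightarrow> real \<Rightarrow> real \<Rightarrow> real \<Rightarrow> real" where
  "sum_rate_gain a b r x y = 1 + a * x + b * y + a * x * (b * y) * r"

lemma sum_rate_gain_pos:
  assumes "a \<ge> 0" "b \<ge> 0" "r \<ge> 0" "x \<ge> 0" "y \<ge> 0"
  shows "sum_rate_gain a b r x y > 0"
  using assms by (simp add: sum_rate_gain_def add_pos_nonneg)

lemma sum_rate_gain_le_full_power:
  assumes "a \<ge> 0" "b \<ge> 0" "r \<ge> 0" "x \<ge> 0" "x + y \<le> P"
  shows "sum_rate_gain a b r x y \<le> sum_rate_gain a b r x (P - x)"
proof -
  have "(b + a * b * r * x) * (P - x - y) \<ge> 0"
    using assms by (intro mult_nonneg_nonneg) auto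
  then show ?thesis
    by (simp add: sum_rate_gain_def algebra_simps)
qed

lemma sum_rate_gain_full_power:
  assumes "a * b * r \<noteq> 0"
  shows "sum_rate_gain a b r t (P - t)
    = 1 + b * P + a * b * r * (t * (P + (a - b) / (a * b * r) - t))"
  using assms by (simp add: sum_rate_gain_def field_simps)

lemma parabola_le_clamped_vertex:
  fixes s t P :: real
  assumes "0 \<le> t" "t \<le> P"
  defines "v \<equiv> min P (max 0 (s / 2))"
  shows "t * (s - t) \<le> v * (s - v)"
proof -
  have "v * (s - v) - t * (s - t) = (v - t) * (s - v - t)"
    by (simp add: algebra_simps)
  moreover have "(v - t) * (s - v - t) \<ge> 0"
  proof (cases "s / 2 \<ge> P")
    case True
    then show ?thesis
      using assms by (intro mult_nonneg_nonneg) (auto simp: v_def)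
  next
    case False
    show ?thesis
    proof (cases "s \<le> 0")
      case True
      then have "(v - t) * (s - v - t) = t * (t - s)"
        using assms by (simp add: v_def algebra_simps)
      then show ?thesis
        using assms True by simp
    next
      case False
      with \<open>\<not> s / 2 \<ge> P\<close> have "(v - t) * (s - v - t) = (s / 2 - t)\<^sup>2"
        by (simp add: v_def power2_eq_square algebra_simps)
      then show ?thesis
        by simp
    qed
  qed
  ultimately show ?thesis
    by simp
qed

lemma sum_rate_gain_le_optimal_split:
  assumes "a > 0" "b > 0" "r > 0" "x \<ge> 0" "y \<ge> 0" "x + y \<le> P"
  defines "v \<equiv> min P (max 0 ((P + (a - b) / (a * b * r)) / 2))"
  shows "sum_rate_gain a b r x y \<le> sum_rate_gain a b r v (P - v)"
proof -
  let ?s = "P + (a - b) / (a * b * r)"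
  have "x * (?s - x) \<le> v * (?s - v)"
    unfolding v_def using assms by (intro parabola_le_clamped_vertex) auto
  then have "sum_rate_gain a b r x (P - x) \<le> sum_rate_gain a b r v (P - v)"
    using assms by (simp add: sum_rate_gain_full_power)
  with sum_rate_gain_le_full_power[of a b r x y P] show ?thesis
    using assms by simp
qed

lemma Sup_log_sum_rate_gain:
  assumes "a > 0" "b > 0" "r > 0" "P \<ge> 0"
  defines "v \<equiv> min P (max 0 ((P + (a - b) / (a * b * r)) / 2))"
  shows "Sup ((\<lambda>(x, y). log 2 (sum_rate_gain a b r x y))
      ` {(x, y). x \<ge> 0 \<and> y \<ge> 0 \<and> x + y \<le> P})
    = log 2 (sum_rate_gain a b r v (P - v))"
proof (rule cSup_eq_maximum)
  have "0 \<le> v" "v \<le> P"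
    using assms by (auto simp: v_def)
  then show "log 2 (sum_rate_gain a b r v (P - v))
      \<in> (\<lambda>(x, y). log 2 (sum_rate_gain a b r x y)) ` {(x, y). x \<ge> 0 \<and> y \<ge> 0 \<and> x + y \<le> P}"
    by (intro image_eqI[where x = "(v, P - v)"]) auto
next
  fix z
  assume "z \<in> (\<lambda>(x, y). log 2 (sum_rate_gain a b r x y))
    ` {(x, y). x \<ge> 0 \<and> y \<ge> 0 \<and> x + y \<le> P}"
  then obtain x y where xy: "x \<ge> 0" "y \<ge> 0" "x + y \<le> P"
    and z: "z = log 2 (sum_rate_gain a b r x y)"
    by auto
  show "z \<le> log 2 (sum_rate_gain a b r v (P - v))"
    unfolding z v_def using assms xy
    by (simp add: sum_rate_gain_pos sum_rate_gain_le_optimal_split)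
qed

theorem theorem5:
  fixes P Au1 Au2 s1 s2 g1 g2 k0 eta :: real and rho :: complex
  assumes "P > 0" "Au1 > 0" "Au2 > 0" "s1 > 0" "s2 > 0" "g1 > 0" "g2 > 0"
    and "k0 > 0" "eta > 0" and "cmod rho < 1"
  defines "rhobar \<equiv> 1 - (cmod rho)^2"
  defines "xi \<equiv> (Au1 * g1 / s1 - Au2 * g2 / s2) /
              (Au1 * Au2 * k0^2 * eta^2 * g1 * g2 * rhobar / (4 * pi * s1 * s2))"
  defines "eps1 \<equiv> gamma_dl Au1 s1 k0 eta ((P + xi) / 2) * g1"
  defines "eps2 \<equiv> gamma_dl Au2 s2 k0 eta ((P - xi) / 2) * g2"
  shows "C_dl P Au1 Au2 s1 s2 g1 g2 k0 eta rhobar =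
          (if xi \<ge> P then log 2 (1 + gamma_dl Au1 s1 k0 eta P * g1)
           else if xi \<le> - P then log 2 (1 + gamma_dl Au2 s2 k0 eta P * g2)
           else log 2 (1 + eps1 + eps2 + eps1 * eps2 * rhobar))"
proof -
  define a where "a = Au1 * k0^2 * eta^2 / (4 * pi * s1) * g1"
  define b where "b = Au2 * k0^2 * eta^2 / (4 * pi * s2) * g2"
  have gamma1: "gamma_dl Au1 s1 k0 eta x * g1 = a * x" for x
    by (simp add: a_def gamma_dl_def)
  have gamma2: "gamma_dl Au2 s2 k0 eta x * g2 = b * x" for x
    by (simp add: b_def gamma_dl_def)
  have "a > 0" "b > 0"
    using assms(2-9) by (simp_all add: a_def b_def)
  have "rhobar > 0"
    using assms(10) by (simp add: rhobar_def abs_square_less_1)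
  have xi: "xi = (a - b) / (a * b * rhobar)"
    using assms(2-9) \<open>rhobar > 0\<close>
    by (simp add: xi_def a_def b_def field_simps power2_eq_square)
  have objective: "1 + gamma_dl Au1 s1 k0 eta x * g1 + gamma_dl Au2 s2 k0 eta y * g2
      + gamma_dl Au1 s1 k0 eta x * gamma_dl Au2 s2 k0 eta y * g1 * g2 * rhobar
    = sum_rate_gain a b rhobar x y" for x y
    by (simp add: sum_rate_gain_def mult.commute mult.left_commute flip: gamma1 gamma2)
  have "C_dl P Au1 Au2 s1 s2 g1 g2 k0 eta rhobar
      = Sup ((\<lambda>(x, y). log 2 (sum_rate_gain a b rhobar x y))
          ` {(x, y). x \<ge> 0 \<and> y \<ge> 0 \<and> x + y \<le> P})"
    by (simp add: C_dl_def objective)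
  also have "\<dots> = log 2 (sum_rate_gain a b rhobar (min P (max 0 ((P + xi) / 2)))
      (P - min P (max 0 ((P + xi) / 2))))"
    unfolding xi using \<open>a > 0\<close> \<open>b > 0\<close> \<open>rhobar > 0\<close> assms(1)
    by (intro Sup_log_sum_rate_gain) auto
  also have "\<dots> = (if xi \<ge> P then log 2 (sum_rate_gain a b rhobar P 0)
      else if xi \<le> - P then log 2 (sum_rate_gain a b rhobar 0 P)
      else log 2 (sum_rate_gain a b rhobar ((P + xi) / 2) ((P - xi) / 2)))"
    using assms(1) by (auto simp: field_simps)
  finally show ?thesis
    by (simp add: eps1_def eps2_def gamma1 gamma2 sum_rate_gain_def)
qed

end
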